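(* Let $S$ be a monoid and $n\in\mathbb N$. If $A$ is an $n$-absolutely pure $S$-act and $B$ is $n$-built from $A$, then $A$ is a retract of $B$. Likewise, if $A$ is an absolutely pure $S$-act and $B$ is built from $A$, then $A$ is a retract of $B$.
   Context: A (right) $S$-act is a set with an action $(a,s)\mapsto as$ with $a1=a$, $a(st)=(as)t$. Equations over an $S$-act $C$ with variables from $X$ have the forms $xs=yt$, $xs=xt$, $xs=c$; a set of equations is consistent if it has a solution in some $S$-act containing $C$. For a set $\Sigma$ of equations over $C$, let $\kappa_\Sigma$ be the congruence on $C\sqcup F_S(X)$ ($F_S(X)$ the free $S$-act on $X$) generated by the pairs $(xu,yv)$ for $xu=yv\in\Sigma$ and $(xs,c)$ for $xs=c\in\Sigma$, and $C(\Sigma)=(C\sqcup F_S(X))/\kappa_\Sigma$; if $\Sigma$ is consistent, $C$ is identified with its image in $C(\Sigma)$ under $c\mapsto[c]$. $A$ is $n$-absolutely pure if every finite consistent set of equations over $A$ in at most $n$ variables has a solution in $A$, and absolutely pure if this holds for all $n$. $B\supseteq A$ is built (resp. $n$-built) from $A=A_0$ if $B=\bigcup_{0\le i\le\xi}A_i$ for some ordinal $\xi$, where for each $i<\xi$, $A_{i+1}=A_i(\Sigma_i)$ for some finite consistent set $\Sigma_i$ of equations over $A_i$ (resp. in at most $n$ variables), and for limit ordinals $\zeta\le\xi$, $A_\zeta=\bigcup_{i<\zeta}A_i$. $A$ is a retract of $B$ if there is an $S$-morphism $B\to A$ restricting to the identity on $A$. *)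

theory Defs
  imports Main
begin

definition is_act :: "'a set \<Rightarrow> ('a \<Rightarrow> 's::monoid_mult \<Rightarrow> 'a) \<Rightarrow> bool" where
  "is_act D act \<longleftrightarrow>
     (\<forall>a\<in>D. \<forall>s. act a s \<in> D) \<and> (\<forall>a\<in>D. act a 1 = a) \<and>
     (\<forall>a\<in>D. \<forall>s t. act a (s * t) = act (act a s) t)"

text \<open>Variables are natural numbers.  Eq_VV x s y t is the equation x s = y t
  (the case x = y gives x s = x t); Eq_VC x s c is the equation x s = c.\<close>
datatype ('s, 'a) eqn = Eq_VV nat 's nat 's | Eq_VC nat 's 'a

fun eqn_vars :: "('s, 'a) eqn \<Rightarrow> nat set" where
  "eqn_vars (Eq_VV x s y t) = {x, y}"
| "eqn_vars (Eq_VC x s c) = {x}"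

definition vars :: "('s, 'a) eqn set \<Rightarrow> nat set" where
  "vars Sig = (\<Union>q\<in>Sig. eqn_vars q)"

fun eqn_consts :: "('s, 'a) eqn \<Rightarrow> 'a set" where
  "eqn_consts (Eq_VV x s y t) = {}"
| "eqn_consts (Eq_VC x s c) = {c}"

definition eqns_over :: "'a set \<Rightarrow> ('s, 'a) eqn set \<Rightarrow> bool" where
  "eqns_over C Sig \<longleftrightarrow> (\<forall>q\<in>Sig. eqn_consts q \<subseteq> C)"

fun sat :: "('d \<Rightarrow> 's \<Rightarrow> 'd) \<Rightarrow> (nat \<Rightarrow> 'd) \<Rightarrow> ('a \<Rightarrow> 'd) \<Rightarrow> ('s, 'a) eqn \<Rightarrow> bool" where
  "sat act \<sigma> e (Eq_VV x s y t) = (act (\<sigma> x) s = act (\<sigma> y) t)"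
| "sat act \<sigma> e (Eq_VC x s c) = (act (\<sigma> x) s = e c)"

text \<open>The witness act is taken on the type 'a + nat * 's, which is
  big enough: the subact generated by C and a solution is a quotient of
  C + F_S(vars Sig), hence injects into this type.\<close>
definition consistent :: "'a set \<Rightarrow> ('a \<Rightarrow> 's::monoid_mult \<Rightarrow> 'a) \<Rightarrow> ('s, 'a) eqn set \<Rightarrow> bool" where
  "consistent C act Sig \<longleftrightarrow>
     (\<exists>(D :: ('a + nat \<times> 's) set) actD e \<sigma>.
        is_act D actD \<and> e ` C \<subseteq> D \<and> inj_on e C \<and>
        (\<forall>c\<in>C. \<forall>s. e (act c s) = actD (e c) s) \<and>
        (\<forall>x\<in>vars Sig. \<sigma> x \<in> D) \<and> (\<forall>q\<in>Sig. sat actD \<sigma> e q))"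

definition has_solution_in :: "'a set \<Rightarrow> ('a \<Rightarrow> 's \<Rightarrow> 'a) \<Rightarrow> ('s, 'a) eqn set \<Rightarrow> bool" where
  "has_solution_in A act Sig \<longleftrightarrow>
     (\<exists>\<sigma>. (\<forall>x\<in>vars Sig. \<sigma> x \<in> A) \<and> (\<forall>q\<in>Sig. sat act \<sigma> id q))"

definition n_absolutely_pure :: "nat \<Rightarrow> 'a set \<Rightarrow> ('a \<Rightarrow> 's::monoid_mult \<Rightarrow> 'a) \<Rightarrow> bool" where
  "n_absolutely_pure n A act \<longleftrightarrow>
     (\<forall>Sig :: ('s, 'a) eqn set. finite Sig \<and> eqns_over A Sig \<and> card (vars Sig) \<le> n \<and>
        consistent A act Sig \<longrightarrow> has_solution_in A act Sig)"

definition absolutely_pure :: "'a set \<Rightarrow> ('a \<Rightarrow> 's::monoid_mult \<Rightarrow> 'a) \<Rightarrow> bool" where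
  "absolutely_pure A act \<longleftrightarrow> (\<forall>n. n_absolutely_pure n A act)"

text \<open>C + F_S(X), with X = vars Sig; F_S(X) is X * S, (x,u) standing for x u.\<close>
definition sum_carrier :: "'a set \<Rightarrow> ('s, 'a) eqn set \<Rightarrow> ('a + nat \<times> 's) set" where
  "sum_carrier C Sig = Inl ` C \<union> Inr ` (vars Sig \<times> UNIV)"

fun sum_act :: "('a \<Rightarrow> 's::monoid_mult \<Rightarrow> 'a) \<Rightarrow> 'a + nat \<times> 's \<Rightarrow> 's \<Rightarrow> 'a + nat \<times> 's" where
  "sum_act act (Inl c) s = Inl (act c s)"
| "sum_act act (Inr (x, u)) s = Inr (x, u * s)"

definition is_congruence :: "'b set \<Rightarrow> ('b \<Rightarrow> 's \<Rightarrow> 'b) \<Rightarrow> ('b \<times> 'b) set \<Rightarrow> bool" where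
  "is_congruence U act R \<longleftrightarrow> equiv U R \<and> (\<forall>(a, b)\<in>R. \<forall>s. (act a s, act b s) \<in> R)"

fun gen_pair :: "('s, 'a) eqn \<Rightarrow> ('a + nat \<times> 's) \<times> ('a + nat \<times> 's)" where
  "gen_pair (Eq_VV x u y v) = (Inr (x, u), Inr (y, v))"
| "gen_pair (Eq_VC x s c) = (Inr (x, s), Inl c)"

definition kappa :: "'a set \<Rightarrow> ('a \<Rightarrow> 's::monoid_mult \<Rightarrow> 'a) \<Rightarrow> ('s, 'a) eqn set
                     \<Rightarrow> (('a + nat \<times> 's) \<times> ('a + nat \<times> 's)) set" where
  "kappa C act Sig = \<Inter> {R. is_congruence (sum_carrier C Sig) (sum_act act) R \<and> gen_pair ` Sig \<subseteq> R}"

text \<open>D (a subset of the ambient act, with the ambient action act) is C(Sigma),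
  with C identified with its image c \<mapsto> [c]: there is a surjective
  S-morphism f from C + F_S(X) onto D whose kernel is exactly kappa_Sigma
  (so f induces an isomorphism C(Sigma) \<cong> D) and which sends c to c.\<close>
definition is_extension :: "'a set \<Rightarrow> ('a \<Rightarrow> 's::monoid_mult \<Rightarrow> 'a) \<Rightarrow> ('s, 'a) eqn set \<Rightarrow> 'a set \<Rightarrow> bool" where
  "is_extension C act Sig D \<longleftrightarrow>
     (\<exists>f :: 'a + nat \<times> 's \<Rightarrow> 'a.
        f ` sum_carrier C Sig = D \<and>
        (\<forall>u\<in>sum_carrier C Sig. \<forall>v\<in>sum_carrier C Sig. f u = f v \<longleftrightarrow> (u, v) \<in> kappa C act Sig) \<and>
        (\<forall>u\<in>sum_carrier C Sig. \<forall>s. f (sum_act act u s) = act (f u) s) \<and>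
        (\<forall>c\<in>C. f (Inl c) = c))"

text \<open>A chain (A_i) indexed by a well-ordered type 'i (playing the role of the
  ordinals 0..xi), with admissible equation sets given by ok.
  A_least = A; A_(i+1) = A_i(Sigma_i) with Sigma_i finite, consistent, over A_i, ok;
  limit stages are unions; B is the union of all stages.\<close>
definition built_chain ::
  "(('s, 'a) eqn set \<Rightarrow> bool) \<Rightarrow> 'a set \<Rightarrow> 'a set \<Rightarrow> ('a \<Rightarrow> 's::monoid_mult \<Rightarrow> 'a)
     \<Rightarrow> ('i::wellorder \<Rightarrow> 'a set) \<Rightarrow> bool" where
  "built_chain ok A B act Ai \<longleftrightarrow>
     (\<forall>i. (\<forall>j. i \<le> j) \<longrightarrow> Ai i = A) \<and>
     (\<forall>i j. i < j \<and> (\<forall>k. i < k \<longrightarrow> j \<le> k) \<longrightarrow>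
        (\<exists>Sig. finite Sig \<and> ok Sig \<and> eqns_over (Ai i) Sig \<and> consistent (Ai i) act Sig \<and>
               is_extension (Ai i) act Sig (Ai j))) \<and>
     (\<forall>j. (\<exists>i. i < j) \<and> (\<forall>i<j. \<exists>k. i < k \<and> k < j) \<longrightarrow> Ai j = (\<Union>i\<in>{i. i < j}. Ai i)) \<and>
     B = (\<Union>i. Ai i)"

definition n_built_chain ::
  "nat \<Rightarrow> 'a set \<Rightarrow> 'a set \<Rightarrow> ('a \<Rightarrow> 's::monoid_mult \<Rightarrow> 'a) \<Rightarrow> ('i::wellorder \<Rightarrow> 'a set) \<Rightarrow> bool" where
  "n_built_chain n = built_chain (\<lambda>Sig. card (vars Sig) \<le> n)"

definition any_built_chain ::
  "'a set \<Rightarrow> 'a set \<Rightarrow> ('a \<Rightarrow> 's::monoid_mult \<Rightarrow> 'a) \<Rightarrow> ('i::wellorder \<Rightarrow> 'a set) \<Rightarrow> bool" where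
  "any_built_chain = built_chain (\<lambda>Sig. True)"

definition is_retract :: "'a set \<Rightarrow> 'a set \<Rightarrow> ('a \<Rightarrow> 's \<Rightarrow> 'a) \<Rightarrow> bool" where
  "is_retract A B act \<longleftrightarrow>
     (\<exists>r. (\<forall>b\<in>B. r b \<in> A) \<and> (\<forall>b\<in>B. \<forall>s. r (act b s) = act (r b) s) \<and> (\<forall>a\<in>A. r a = a))"

end

theory Submission
  imports Defs
begin

text \<open>A retraction r of an act C onto A extends to C(Sigma) as soon as the pushed
  system r(Sigma), obtained by replacing every constant c by r c, has a solution in A:
  C(Sigma) is freely generated over C by a solution of Sigma. The pushed system is
  consistent, because collapsing C onto A along r inside C(Sigma) turns the canonical
  solution of Sigma into a solution of r(Sigma) in an act containing A. It has the same
  variables as Sigma, so (n-)absolute purity of A solves it. Transfinite recursion along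
  the chain then produces compatible retractions of all stages, glued at limit stages
  and finally on B.\<close>

definition retraction :: "'a set \<Rightarrow> ('a \<Rightarrow> 's \<Rightarrow> 'a) \<Rightarrow> 'a set \<Rightarrow> ('a \<Rightarrow> 'a) \<Rightarrow> bool" where
  "retraction A act D r \<longleftrightarrow>
     A \<subseteq> D \<and> (\<forall>b\<in>D. r b \<in> A) \<and> (\<forall>b\<in>D. \<forall>s. r (act b s) = act (r b) s) \<and> (\<forall>a\<in>A. r a = a)"

lemma is_retract_if_retraction: "retraction A act B r \<Longrightarrow> is_retract A B act"
  unfolding retraction_def is_retract_def by blast

fun map_eqn_const :: "('a \<Rightarrow> 'b) \<Rightarrow> ('s, 'a) eqn \<Rightarrow> ('s, 'b) eqn" where
  "map_eqn_const r (Eq_VV x s y t) = Eq_VV x s y t"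
| "map_eqn_const r (Eq_VC x s c) = Eq_VC x s (r c)"

lemma vars_map_eqn_const: "vars (map_eqn_const r ` Sig) = vars Sig"
proof -
  have "eqn_vars (map_eqn_const r q) = eqn_vars q" for q by (cases q) auto
  then show ?thesis unfolding vars_def by force
qed

lemma eqns_over_map_eqn_const:
  assumes "eqns_over C Sig" and "r ` C \<subseteq> A"
  shows "eqns_over A (map_eqn_const r ` Sig)"
proof -
  have "eqn_consts (map_eqn_const r q) \<subseteq> A" if "q \<in> Sig" for q
    using that assms by (cases q) (auto simp: eqns_over_def image_subset_iff)
  then show ?thesis unfolding eqns_over_def by blast
qed

lemma sat_map_eqn_const: "sat act \<sigma> e (map_eqn_const r q) = sat act \<sigma> (e \<circ> r) q"
  by (cases q) auto

lemma eqn_vars_subset_vars: "q \<in> Sig \<Longrightarrow> eqn_vars q \<subseteq> vars Sig"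
  unfolding vars_def by auto

lemma eqn_consts_subset: "eqns_over C Sig \<Longrightarrow> q \<in> Sig \<Longrightarrow> eqn_consts q \<subseteq> C"
  unfolding eqns_over_def by blast

lemma is_act_UN:
  assumes "\<And>i. i \<in> I \<Longrightarrow> is_act (Ai i) act"
  shows "is_act (\<Union>i\<in>I. Ai i) act"
  unfolding is_act_def
proof (intro conjI ballI allI)
  fix b s t assume "b \<in> (\<Union>i\<in>I. Ai i)"
  then obtain i where "i \<in> I" "b \<in> Ai i" by blast
  with assms[of i] show "act b s \<in> (\<Union>i\<in>I. Ai i)" and "act b 1 = b"
    and "act b (s * t) = act (act b s) t"
    unfolding is_act_def by blast+
qed

lemma is_act_morphic_image:
  assumes U: "is_act U actU" and f: "\<forall>u\<in>U. \<forall>s. f (actU u s) = act (f u) s"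
  shows "is_act (f ` U) act"
  unfolding is_act_def
proof (intro conjI ballI allI)
  fix b s t assume "b \<in> f ` U"
  then obtain u where u: "u \<in> U" and b: "b = f u" by blast
  have "actU u s \<in> U" using U u unfolding is_act_def by blast
  moreover have "act b s = f (actU u s)" using f u b by simp
  ultimately show "act b s \<in> f ` U" by blast
  have "act b 1 = f (actU u 1)" using f u b by simp
  then show "act b 1 = b" using U u b unfolding is_act_def by simp
  have "act b (s * t) = f (actU u (s * t))" using f u b by simp
  also have "\<dots> = f (actU (actU u s) t)" using U u unfolding is_act_def by simp
  also have "\<dots> = act (f (actU u s)) t" using f \<open>actU u s \<in> U\<close> by simp
  also have "\<dots> = act (act b s) t" using f u b by simp
  finally show "act b (s * t) = act (act b s) t" .
qed

lemma is_act_sum_carrier: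
  assumes "is_act C act"
  shows "is_act (sum_carrier C Sig) (sum_act act)"
  unfolding is_act_def
proof (intro conjI ballI allI)
  fix u s t assume "u \<in> sum_carrier C Sig"
  then consider c where "c \<in> C" "u = Inl c" | x w where "x \<in> vars Sig" "u = Inr (x, w)"
    unfolding sum_carrier_def by blast
  then show "sum_act act u s \<in> sum_carrier C Sig" and "sum_act act u 1 = u"
    and "sum_act act u (s * t) = sum_act act (sum_act act u s) t"
    by (cases, use assms in \<open>auto simp: is_act_def sum_carrier_def mult.assoc\<close>)+
qed

text \<open>The witness required by consistent lives on the type 'a + nat \<times> 's; an act on
  'a is moved there along Inl.\<close>
lemma consistent_if_solvable_in_superact:
  assumes E: "is_act E actE" and "A \<subseteq> E" and "\<forall>a\<in>A. \<forall>s. actE a s = act a s"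
    and "\<forall>x\<in>vars Sig. \<sigma> x \<in> E" and "\<forall>q\<in>Sig. sat actE \<sigma> id q"
  shows "consistent A act Sig"
  unfolding consistent_def
proof (intro exI conjI)
  let ?actD = "\<lambda>z s. map_sum (\<lambda>d. actE d s) id z :: 'a + nat \<times> 'b"
  show "is_act (Inl ` E) ?actD"
    unfolding is_act_def
  proof (intro conjI ballI allI)
    fix z :: "'a + nat \<times> 'b" and s t assume "z \<in> Inl ` E"
    then obtain d where d: "d \<in> E" and z: "z = Inl d" by blast
    have "actE d s \<in> E" "actE d 1 = d" "actE d (s * t) = actE (actE d s) t"
      using E d unfolding is_act_def by blast+
    then show "?actD z s \<in> Inl ` E" and "?actD z 1 = z" and "?actD z (s * t) = ?actD (?actD z s) t"
      using z by simp_all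
  qed
  show "inj_on Inl A" by simp
  have "sat ?actD (Inl \<circ> \<sigma>) Inl q = sat actE \<sigma> id q" for q by (cases q) auto
  then show "\<forall>q\<in>Sig. sat ?actD (Inl \<circ> \<sigma>) Inl q" using assms by blast
  show "Inl ` A \<subseteq> Inl ` E" using assms(2) by blast
  show "\<forall>c\<in>A. \<forall>s. Inl (act c s) = map_sum (\<lambda>d. actE d s) id (Inl c)" using assms(3) by simp
  show "\<forall>x\<in>vars Sig. (Inl \<circ> \<sigma>) x \<in> Inl ` E" using assms(4) by simp
qed

lemma is_extensionE:
  assumes "is_extension C act Sig D"
  obtains f where "f ` sum_carrier C Sig = D"
    and "\<And>u v. u \<in> sum_carrier C Sig \<Longrightarrow> v \<in> sum_carrier C Sig \<Longrightarrow>
           f u = f v \<longleftrightarrow> (u, v) \<in> kappa C act Sig"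
    and "\<And>u s. u \<in> sum_carrier C Sig \<Longrightarrow> f (sum_act act u s) = act (f u) s"
    and "\<And>c. c \<in> C \<Longrightarrow> f (Inl c) = c"
  using assms unfolding is_extension_def by blast

lemma Inl_in_sum_carrier: "c \<in> C \<Longrightarrow> Inl c \<in> sum_carrier C Sig"
  and Inr_in_sum_carrier: "x \<in> vars Sig \<Longrightarrow> Inr (x, w) \<in> sum_carrier C Sig"
  unfolding sum_carrier_def by auto

lemma is_extension_superset:
  assumes "is_extension C act Sig D"
  shows "C \<subseteq> D"
proof
  fix c assume "c \<in> C"
  obtain f where "f ` sum_carrier C Sig = D" and "\<And>c. c \<in> C \<Longrightarrow> f (Inl c) = c"
    using assms by (rule is_extensionE) blast
  with \<open>c \<in> C\<close> Inl_in_sum_carrier show "c \<in> D" by (metis image_eqI)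
qed

lemma is_extension_act:
  assumes "is_act C act" and "is_extension C act Sig D"
  shows "is_act D act"
proof -
  obtain f where "f ` sum_carrier C Sig = D"
    and "\<And>u s. u \<in> sum_carrier C Sig \<Longrightarrow> f (sum_act act u s) = act (f u) s"
    using assms(2) by (rule is_extensionE) blast
  with is_act_morphic_image[OF is_act_sum_carrier[OF assms(1)]] show ?thesis by blast
qed

lemma gen_pair_in_sum_carrier:
  assumes "eqns_over C Sig" and "q \<in> Sig"
  shows "fst (gen_pair q) \<in> sum_carrier C Sig" and "snd (gen_pair q) \<in> sum_carrier C Sig"
  using assms eqn_vars_subset_vars[OF assms(2)] eqn_consts_subset[OF assms]
  by (cases q; auto simp: sum_carrier_def)+

lemma gen_pair_in_kappa: "q \<in> Sig \<Longrightarrow> gen_pair q \<in> kappa C act Sig"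
  unfolding kappa_def by blast

lemma has_solution_in_extension:
  assumes ext: "is_extension C act Sig D" and over: "eqns_over C Sig"
  shows "has_solution_in D act Sig"
proof -
  let ?U = "sum_carrier C Sig"
  obtain f where fD: "f ` ?U = D"
    and fk: "\<And>u v. u \<in> ?U \<Longrightarrow> v \<in> ?U \<Longrightarrow> f u = f v \<longleftrightarrow> (u, v) \<in> kappa C act Sig"
    and fm: "\<And>u s. u \<in> ?U \<Longrightarrow> f (sum_act act u s) = act (f u) s"
    and fc: "\<And>c. c \<in> C \<Longrightarrow> f (Inl c) = c"
    using ext by (rule is_extensionE) blast
  define \<sigma> where "\<sigma> x = f (Inr (x, 1))" for x
  have f_Inr: "f (Inr (x, w)) = act (\<sigma> x) w" if "x \<in> vars Sig" for x w
    using fm[OF Inr_in_sum_carrier[OF that], of 1 w] unfolding \<sigma>_def by simp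
  have "sat act \<sigma> id q" if "q \<in> Sig" for q
  proof -
    have "f (fst (gen_pair q)) = f (snd (gen_pair q))"
      using fk[OF gen_pair_in_sum_carrier[OF over that]] gen_pair_in_kappa[OF that] by simp
    then show ?thesis
      using f_Inr fc eqn_vars_subset_vars[OF that] eqn_consts_subset[OF over that] by (cases q) auto
  qed
  moreover have "\<sigma> x \<in> D" if "x \<in> vars Sig" for x
    using fD Inr_in_sum_carrier[OF that] unfolding \<sigma>_def by blast
  ultimately show ?thesis unfolding has_solution_in_def by blast
qed

lemma kappa_subset_kernel:
  assumes C: "is_act C act" and over: "eqns_over C Sig"
    and g: "\<And>u s. u \<in> sum_carrier C Sig \<Longrightarrow> g (sum_act act u s) = actT (g u) s"
    and gen: "\<And>q. q \<in> Sig \<Longrightarrow> g (fst (gen_pair q)) = g (snd (gen_pair q))"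
    and uv: "(u, v) \<in> kappa C act Sig"
  shows "g u = g v"
proof -
  let ?U = "sum_carrier C Sig"
  define K where "K = {(u, v). u \<in> ?U \<and> v \<in> ?U \<and> g u = g v}"
  have closed: "sum_act act u s \<in> ?U" if "u \<in> ?U" for u s
    using is_act_sum_carrier[OF C] that unfolding is_act_def by blast
  have "equiv ?U K"
    unfolding equiv_def refl_on_def sym_def trans_def K_def by auto
  moreover have "(sum_act act u s, sum_act act v s) \<in> K" if "(u, v) \<in> K" for u v s
    using that closed g unfolding K_def by auto
  ultimately have "is_congruence ?U (sum_act act) K"
    unfolding is_congruence_def by blast
  moreover have "gen_pair q \<in> K" if "q \<in> Sig" for q
    using gen[OF that] gen_pair_in_sum_carrier[OF over that] unfolding K_def
    by (cases "gen_pair q") simp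
  ultimately have "kappa C act Sig \<subseteq> K" unfolding kappa_def by blast
  then show ?thesis using uv unfolding K_def by blast
qed

lemma extension_universal:
  assumes C: "is_act C act" and ext: "is_extension C act Sig D" and over: "eqns_over C Sig"
    and T: "is_act T actT"
    and kT: "\<forall>c\<in>C. k c \<in> T" and km: "\<forall>c\<in>C. \<forall>s. k (act c s) = actT (k c) s"
    and \<tau>T: "\<forall>x\<in>vars Sig. \<tau> x \<in> T" and \<tau>: "\<forall>q\<in>Sig. sat actT \<tau> k q"
  shows "\<exists>h. (\<forall>b\<in>D. h b \<in> T) \<and> (\<forall>b\<in>D. \<forall>s. h (act b s) = actT (h b) s) \<and> (\<forall>c\<in>C. h c = k c)"
proof -
  let ?U = "sum_carrier C Sig"
  obtain f where fD: "f ` ?U = D"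
    and fk: "\<And>u v. u \<in> ?U \<Longrightarrow> v \<in> ?U \<Longrightarrow> f u = f v \<longleftrightarrow> (u, v) \<in> kappa C act Sig"
    and fm: "\<And>u s. u \<in> ?U \<Longrightarrow> f (sum_act act u s) = act (f u) s"
    and fc: "\<And>c. c \<in> C \<Longrightarrow> f (Inl c) = c"
    using ext by (rule is_extensionE) blast
  define g where "g u = (case u of Inl c \<Rightarrow> k c | Inr (x, w) \<Rightarrow> actT (\<tau> x) w)" for u
  have gT: "g u \<in> T" and gm: "g (sum_act act u s) = actT (g u) s" if "u \<in> ?U" for u s
    using that kT km \<tau>T T unfolding sum_carrier_def g_def is_act_def by auto
  have g_resp: "g u = g v" if "u \<in> ?U" "v \<in> ?U" "f u = f v" for u v
  proof (rule kappa_subset_kernel[OF C over])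
    show "g (sum_act act u s) = actT (g u) s" if "u \<in> ?U" for u s
      using that by (rule gm)
    show "g (fst (gen_pair q)) = g (snd (gen_pair q))" if "q \<in> Sig" for q
      using \<tau> that by (cases q) (auto simp: g_def)
    show "(u, v) \<in> kappa C act Sig" using fk that by blast
  qed
  define h where "h b = g (SOME u. u \<in> ?U \<and> f u = b)" for b
  have hf: "h (f u) = g u" if "u \<in> ?U" for u
  proof -
    have "\<exists>u'. u' \<in> ?U \<and> f u' = f u" using that by blast
    then have "(SOME u'. u' \<in> ?U \<and> f u' = f u) \<in> ?U \<and> f (SOME u'. u' \<in> ?U \<and> f u' = f u) = f u"
      by (rule someI_ex)
    then show ?thesis unfolding h_def using g_resp that by blast
  qed
  have "h b \<in> T \<and> h (act b s) = actT (h b) s" if "b \<in> D" for b s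
  proof -
    obtain u where u: "u \<in> ?U" "b = f u" using fD \<open>b \<in> D\<close> by blast
    have us: "sum_act act u s \<in> ?U"
      using is_act_sum_carrier[OF C] u unfolding is_act_def by blast
    have "h (act b s) = h (f (sum_act act u s))" using fm u by simp
    also have "\<dots> = actT (h b) s" using hf[OF us] gm[OF u(1)] hf[OF u(1)] u by simp
    finally show ?thesis using gT hf u by simp
  qed
  moreover have "h c = k c" if "c \<in> C" for c
    using hf[OF Inl_in_sum_carrier[OF that]] fc that unfolding g_def by simp
  ultimately show ?thesis by blast
qed

definition collapse :: "'a set \<Rightarrow> ('a \<Rightarrow> 'a) \<Rightarrow> 'a \<Rightarrow> 'a" where
  "collapse C r b = (if b \<in> C then r b else b)"

lemma collapse_in: "b \<in> C \<Longrightarrow> collapse C r b = r b"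
  unfolding collapse_def by simp

lemma collapse_act_collapse:
  assumes C: "is_act C act" and r: "retraction A act C r"
  shows "collapse C r (act (collapse C r b) t) = collapse C r (act b t)"
proof (cases "b \<in> C")
  case True
  have rb: "r b \<in> A" and "A \<subseteq> C" using r True unfolding retraction_def by auto
  then have "act (r b) t \<in> C" and "act b t \<in> C" using C True unfolding is_act_def by auto
  moreover have "r (act (r b) t) = act (r b) t" using r rb \<open>A \<subseteq> C\<close> unfolding retraction_def by auto
  moreover have "r (act b t) = act (r b) t" using r True unfolding retraction_def by blast
  ultimately show ?thesis using True unfolding collapse_def by simp
qed (simp add: collapse_def)

text \<open>The pushed system r(Sigma) is solved in the act obtained from D by collapsing C
  onto A along r; the remainder D - C is left untouched.\<close>
lemma consistent_map_eqn_const_retraction: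
  assumes C: "is_act C act" and D: "is_act D act" and "C \<subseteq> D" and r: "retraction A act C r"
    and over: "eqns_over C Sig" and sol: "has_solution_in D act Sig"
  shows "consistent A act (map_eqn_const r ` Sig)"
proof -
  let ?\<rho> = "collapse C r" and ?E = "A \<union> (D - C)"
  let ?actE = "\<lambda>b s. ?\<rho> (act b s)"
  have AC: "A \<subseteq> C" using r unfolding retraction_def by blast
  have \<rho>E: "?\<rho> b \<in> ?E" if "b \<in> D" for b
    using that r unfolding collapse_def retraction_def by auto
  have \<rho>_id: "?\<rho> b = b" if "b \<in> ?E" for b
    using that r unfolding collapse_def retraction_def by auto
  have D_closed: "act b s \<in> D" if "b \<in> D" for b s
    using D that unfolding is_act_def by blast
  have "is_act ?E ?actE"
    unfolding is_act_def
  proof (intro conjI ballI allI)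
    fix b s t assume b: "b \<in> ?E"
    then have "b \<in> D" using AC \<open>C \<subseteq> D\<close> by blast
    show "?actE b s \<in> ?E" using \<rho>E D_closed \<open>b \<in> D\<close> by blast
    show "?actE b 1 = b" using D \<open>b \<in> D\<close> \<rho>_id b unfolding is_act_def by simp
    show "?actE b (s * t) = ?actE (?actE b s) t"
      using D \<open>b \<in> D\<close> collapse_act_collapse[OF C r]
      unfolding is_act_def by simp
  qed
  moreover have "?actE a s = act a s" if "a \<in> A" for a s
  proof -
    have "act a s \<in> C" and "r (act a s) = act (r a) s" and "r a = a"
      using that AC C r unfolding is_act_def retraction_def by auto
    then show ?thesis unfolding collapse_def by simp
  qed
  moreover obtain \<sigma> where \<sigma>D: "\<forall>x\<in>vars Sig. \<sigma> x \<in> D" and \<sigma>: "\<forall>q\<in>Sig. sat act \<sigma> id q"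
    using sol unfolding has_solution_in_def by blast
  moreover have "sat ?actE (?\<rho> \<circ> \<sigma>) id (map_eqn_const r q)" if "q \<in> Sig" for q
  proof -
    have "sat act \<sigma> id q" using \<sigma> that by blast
    then show ?thesis using eqn_consts_subset[OF over that]
      by (cases q) (simp_all add: collapse_act_collapse[OF C r] collapse_in)
  qed
  ultimately show ?thesis
    using \<rho>E vars_map_eqn_const[of r Sig]
    by (intro consistent_if_solvable_in_superact[where E = ?E and actE = ?actE and \<sigma> = "?\<rho> \<circ> \<sigma>"]) auto
qed

lemma retraction_extends_to_extension:
  assumes A: "is_act A act" and C: "is_act C act" and r: "retraction A act C r"
    and ext: "is_extension C act Sig D" and over: "eqns_over C Sig"
    and solvable: "consistent A act (map_eqn_const r ` Sig) \<Longrightarrow>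
      has_solution_in A act (map_eqn_const r ` Sig)"
  shows "\<exists>r'. retraction A act D r' \<and> (\<forall>c\<in>C. r' c = r c)"
proof -
  have CD: "C \<subseteq> D" using ext by (rule is_extension_superset)
  have "consistent A act (map_eqn_const r ` Sig)"
    using consistent_map_eqn_const_retraction[OF C is_extension_act[OF C ext] CD r over]
      has_solution_in_extension[OF ext over] .
  then obtain \<tau> where \<tau>A: "\<forall>x\<in>vars Sig. \<tau> x \<in> A" and \<tau>: "\<forall>q\<in>Sig. sat act \<tau> r q"
    using solvable unfolding has_solution_in_def vars_map_eqn_const
    by (auto simp: sat_map_eqn_const)
  have "\<forall>c\<in>C. r c \<in> A" and "\<forall>c\<in>C. \<forall>s. r (act c s) = act (r c) s" and AC: "A \<subseteq> C"
    using r unfolding retraction_def by auto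
  then obtain h where "\<forall>b\<in>D. h b \<in> A" "\<forall>b\<in>D. \<forall>s. h (act b s) = act (h b) s"
    and hr: "\<forall>c\<in>C. h c = r c"
    using extension_universal[OF C ext over A _ _ \<tau>A \<tau>] by blast
  moreover have "\<forall>a\<in>A. h a = a" using hr AC r unfolding retraction_def by auto
  ultimately have "retraction A act D h" using AC CD unfolding retraction_def by blast
  then show ?thesis using hr by blast
qed

definition immediate_succ :: "'i::order \<Rightarrow> 'i \<Rightarrow> bool" where
  "immediate_succ i j \<longleftrightarrow> i < j \<and> (\<forall>k. i < k \<longrightarrow> j \<le> k)"

definition is_limit :: "'i::order \<Rightarrow> bool" where
  "is_limit j \<longleftrightarrow> (\<exists>i. i < j) \<and> (\<forall>i<j. \<exists>k. i < k \<and> k < j)"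

lemma immediate_succ_unique:
  fixes i :: "'i::linorder"
  shows "immediate_succ i j \<Longrightarrow> immediate_succ i' j \<Longrightarrow> i = i'"
  unfolding immediate_succ_def by (metis leD linorder_neqE)

lemma the_immediate_succ: "immediate_succ i j \<Longrightarrow> (THE i. immediate_succ i j) = (i::'i::linorder)"
  using immediate_succ_unique by blast

lemma stage_cases:
  fixes j :: "'i::linorder"
  obtains (least) "\<forall>i. j \<le> i" | (succ) i where "immediate_succ i j" | (limit) "is_limit j"
proof -
  consider "\<forall>i. j \<le> i" | "is_limit j" | i where "i < j" "\<not> (\<exists>k. i < k \<and> k < j)"
    unfolding is_limit_def by (meson not_le)
  then show ?thesis
  proof cases
    case (3 i)
    then have "immediate_succ i j" unfolding immediate_succ_def by (meson not_le)
    then show ?thesis by (rule that(2))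
  qed (use that in blast)+
qed

lemma immediate_succ_less_iff_le:
  fixes i :: "'i::linorder"
  shows "immediate_succ i j \<Longrightarrow> k < j \<longleftrightarrow> k \<le> i"
  unfolding immediate_succ_def by (meson leD le_less_trans not_le)

lemma is_limit_not_immediate_succ: "is_limit j \<Longrightarrow> \<not> immediate_succ i j"
  unfolding is_limit_def immediate_succ_def by (meson leD)

lemma immediate_succ_not_least: "immediate_succ i j \<Longrightarrow> \<not> (\<forall>k. j \<le> k)"
  unfolding immediate_succ_def by (meson leD)

lemma is_limit_not_least: "is_limit j \<Longrightarrow> \<not> (\<forall>k. j \<le> k)"
  unfolding is_limit_def by (meson leD)

lemma built_chainD:
  assumes "built_chain ok A B act Ai"
  shows built_chain_least: "\<forall>i. j \<le> i \<Longrightarrow> Ai j = A"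
    and built_chain_succ: "immediate_succ i j \<Longrightarrow>
      \<exists>Sig. finite Sig \<and> ok Sig \<and> eqns_over (Ai i) Sig \<and> is_extension (Ai i) act Sig (Ai j)"
    and built_chain_limit: "is_limit j \<Longrightarrow> Ai j = (\<Union>i\<in>{i. i < j}. Ai i)"
    and built_chain_union: "B = (\<Union>i. Ai i)"
proof -
  note c = assms[unfolded built_chain_def]
  show "\<forall>i. j \<le> i \<Longrightarrow> Ai j = A" using c[THEN conjunct1] by blast
  show "immediate_succ i j \<Longrightarrow>
      \<exists>Sig. finite Sig \<and> ok Sig \<and> eqns_over (Ai i) Sig \<and> is_extension (Ai i) act Sig (Ai j)"
    using c[THEN conjunct2, THEN conjunct1, rule_format, of i j] unfolding immediate_succ_def by blast
  show "is_limit j \<Longrightarrow> Ai j = (\<Union>i\<in>{i. i < j}. Ai i)"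
    using c[THEN conjunct2, THEN conjunct2, THEN conjunct1, rule_format, of j]
    unfolding is_limit_def by blast
  show "B = (\<Union>i. Ai i)" using c[THEN conjunct2, THEN conjunct2, THEN conjunct2] .
qed

lemma built_chain_stage:
  fixes Ai :: "'i::wellorder \<Rightarrow> 'a set"
  assumes A: "is_act A act" and ch: "built_chain ok A B act Ai"
  shows "is_act (Ai j) act \<and> (\<forall>i\<le>j. Ai i \<subseteq> Ai j)"
proof (induction j rule: less_induct)
  case (less j)
  show ?case
  proof (cases j rule: stage_cases)
    case least
    then have "\<forall>i\<le>j. i = j" by (simp add: order.antisym)
    then show ?thesis using A built_chain_least[OF ch least] by auto
  next
    case (succ i)
    then have "i < j" unfolding immediate_succ_def by blast
    obtain Sig where "eqns_over (Ai i) Sig" and ext: "is_extension (Ai i) act Sig (Ai j)"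
      using built_chain_succ[OF ch succ] by blast
    have IH: "is_act (Ai i) act" "\<forall>k\<le>i. Ai k \<subseteq> Ai i" using less.IH[OF \<open>i < j\<close>] by auto
    have "Ai i \<subseteq> Ai j" by (rule is_extension_superset[OF ext])
    then show ?thesis using is_extension_act[OF IH(1) ext] IH(2) immediate_succ_less_iff_le[OF succ]
      by (metis order.order_iff_strict order.trans)
  next
    case limit
    then show ?thesis using built_chain_limit[OF ch limit] less.IH is_act_UN[of "{i. i < j}" Ai act]
      by (auto simp: order.order_iff_strict)
  qed
qed

definition glue_retractions :: "('i \<Rightarrow> 'a set) \<Rightarrow> ('i \<Rightarrow> 'a \<Rightarrow> 'a) \<Rightarrow> 'i set \<Rightarrow> 'a \<Rightarrow> 'a" where
  "glue_retractions Ai R I b = (if \<exists>i\<in>I. b \<in> Ai i then R (SOME i. i \<in> I \<and> b \<in> Ai i) b else b)"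

lemma glue_retractions_cong:
  "(\<And>i. i \<in> I \<Longrightarrow> R i = R' i) \<Longrightarrow> glue_retractions Ai R I = glue_retractions Ai R' I"
proof -
  assume eq: "\<And>i. i \<in> I \<Longrightarrow> R i = R' i"
  have "(SOME i. i \<in> I \<and> b \<in> Ai i) \<in> I" if "\<exists>i\<in>I. b \<in> Ai i" for b
    using someI_ex[of "\<lambda>i. i \<in> I \<and> b \<in> Ai i"] that by blast
  then show ?thesis using eq unfolding glue_retractions_def by fastforce
qed

lemma glue_retractions_agree:
  fixes Ai :: "'i::linorder \<Rightarrow> 'a set"
  assumes coh: "\<And>i k a. i \<in> I \<Longrightarrow> k \<in> I \<Longrightarrow> i \<le> k \<Longrightarrow> a \<in> Ai i \<Longrightarrow> R k a = R i a"
    and "i \<in> I" and "a \<in> Ai i"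
  shows "glue_retractions Ai R I a = R i a"
proof -
  let ?k = "SOME k. k \<in> I \<and> a \<in> Ai k"
  have k: "?k \<in> I \<and> a \<in> Ai ?k" using assms(2,3) by (metis (mono_tags, lifting) someI_ex)
  then have "glue_retractions Ai R I a = R ?k a" unfolding glue_retractions_def by auto
  also have "\<dots> = R i a" using coh[of i ?k] coh[of ?k i] k assms(2,3) by (cases "i \<le> ?k") auto
  finally show ?thesis .
qed

lemma retraction_glue:
  fixes Ai :: "'i::linorder \<Rightarrow> 'a set"
  assumes "i0 \<in> I"
    and acts: "\<And>i. i \<in> I \<Longrightarrow> is_act (Ai i) act"
    and rs: "\<And>i. i \<in> I \<Longrightarrow> retraction A act (Ai i) (R i)"
    and coh: "\<And>i k a. i \<in> I \<Longrightarrow> k \<in> I \<Longrightarrow> i \<le> k \<Longrightarrow> a \<in> Ai i \<Longrightarrow> R k a = R i a"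
  shows "retraction A act (\<Union>i\<in>I. Ai i) (glue_retractions Ai R I)"
proof -
  have agree: "glue_retractions Ai R I a = R i a" if "i \<in> I" "a \<in> Ai i" for i a
    using coh that by (rule glue_retractions_agree)
  show ?thesis
    unfolding retraction_def
  proof (intro conjI ballI allI)
    show "A \<subseteq> (\<Union>i\<in>I. Ai i)" using rs[OF \<open>i0 \<in> I\<close>] \<open>i0 \<in> I\<close> unfolding retraction_def by blast
  next
    fix b s assume "b \<in> (\<Union>i\<in>I. Ai i)"
    then obtain i where i: "i \<in> I" "b \<in> Ai i" by blast
    have "act b s \<in> Ai i" using acts[OF i(1)] i(2) unfolding is_act_def by blast
    then show "glue_retractions Ai R I (act b s) = act (glue_retractions Ai R I b) s"
      using rs[OF i(1)] i agree unfolding retraction_def by simp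
    show "glue_retractions Ai R I b \<in> A"
      using rs[OF i(1)] i agree unfolding retraction_def by simp
  next
    fix a assume "a \<in> A"
    then have "a \<in> Ai i0" using rs[OF \<open>i0 \<in> I\<close>] unfolding retraction_def by blast
    then show "glue_retractions Ai R I a = a"
      using rs[OF \<open>i0 \<in> I\<close>] \<open>a \<in> A\<close> agree[OF \<open>i0 \<in> I\<close>]
      unfolding retraction_def by simp
  qed
qed

definition extend_retraction ::
  "'a set \<Rightarrow> ('a \<Rightarrow> 's \<Rightarrow> 'a) \<Rightarrow> ('i \<Rightarrow> 'a set) \<Rightarrow> ('a \<Rightarrow> 'a) \<Rightarrow> 'i \<Rightarrow> 'i \<Rightarrow> 'a \<Rightarrow> 'a" where
  "extend_retraction A act Ai r i j = (SOME r'. retraction A act (Ai j) r' \<and> (\<forall>a\<in>Ai i. r' a = r a))"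

definition chain_retraction_step ::
  "'a set \<Rightarrow> ('a \<Rightarrow> 's \<Rightarrow> 'a) \<Rightarrow> ('i::wellorder \<Rightarrow> 'a set) \<Rightarrow> ('i \<Rightarrow> 'a \<Rightarrow> 'a) \<Rightarrow> 'i \<Rightarrow> 'a \<Rightarrow> 'a"
where
  "chain_retraction_step A act Ai R j =
     (if \<forall>i. j \<le> i then id
      else if \<exists>i. immediate_succ i j
        then extend_retraction A act Ai (R (THE i. immediate_succ i j)) (THE i. immediate_succ i j) j
      else glue_retractions Ai R {i. i < j})"

text \<open>The retraction of each stage is chosen once and for all by well-founded recursion;
  this makes the retractions of all earlier stages compatible, so that they glue at limits.\<close>
definition chain_retraction ::
  "'a set \<Rightarrow> ('a \<Rightarrow> 's \<Rightarrow> 'a) \<Rightarrow> ('i::wellorder \<Rightarrow> 'a set) \<Rightarrow> 'i \<Rightarrow> 'a \<Rightarrow> 'a" where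
  "chain_retraction A act Ai = wfrec {(i, j). i < j} (chain_retraction_step A act Ai)"

lemma chain_retraction_unfold:
  fixes Ai :: "'i::wellorder \<Rightarrow> 'a set"
  shows "chain_retraction A act Ai j = chain_retraction_step A act Ai (chain_retraction A act Ai) j"
proof -
  have "adm_wf {(i, j). i < j} (chain_retraction_step A act Ai)"
    unfolding adm_wf_def
  proof (intro allI impI)
    fix R R' :: "'i \<Rightarrow> 'a \<Rightarrow> 'a" and j
    assume eq: "\<forall>i. (i, j) \<in> {(i, j). i < j} \<longrightarrow> R i = R' i"
    have "R (THE i. immediate_succ i j) = R' (THE i. immediate_succ i j)" if "immediate_succ i j" for i
      using eq that the_immediate_succ[OF that] unfolding immediate_succ_def by auto
    moreover have "glue_retractions Ai R {i. i < j} = glue_retractions Ai R' {i. i < j}"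
      using eq by (intro glue_retractions_cong) auto
    ultimately show "chain_retraction_step A act Ai R j = chain_retraction_step A act Ai R' j"
      unfolding chain_retraction_step_def by auto
  qed
  then show ?thesis
    unfolding chain_retraction_def by (subst wfrec_fixpoint) (auto intro: wf)
qed

lemma chain_retraction_least: "\<forall>i. j \<le> i \<Longrightarrow> chain_retraction A act Ai j = id"
  by (subst chain_retraction_unfold) (simp add: chain_retraction_step_def)

lemma chain_retraction_succ:
  "immediate_succ i j \<Longrightarrow>
    chain_retraction A act Ai j = extend_retraction A act Ai (chain_retraction A act Ai i) i j"
  by (subst chain_retraction_unfold)
    (auto simp: chain_retraction_step_def the_immediate_succ immediate_succ_not_least)

lemma chain_retraction_limit:
  "is_limit j \<Longrightarrow> chain_retraction A act Ai j = glue_retractions Ai (chain_retraction A act Ai) {i. i < j}"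
  by (subst chain_retraction_unfold)
    (simp add: chain_retraction_step_def is_limit_not_least is_limit_not_immediate_succ)

lemma built_chain_retraction_extends:
  assumes A: "is_act A act" and ch: "built_chain (\<lambda>Sig. P (vars Sig)) A B act Ai"
    and pure: "\<And>Sig. finite Sig \<Longrightarrow> eqns_over A Sig \<Longrightarrow> P (vars Sig) \<Longrightarrow> consistent A act Sig \<Longrightarrow>
      has_solution_in A act Sig"
    and succ: "immediate_succ i j" and r: "retraction A act (Ai i) r"
  shows "\<exists>r'. retraction A act (Ai j) r' \<and> (\<forall>a\<in>Ai i. r' a = r a)"
proof -
  obtain Sig where fin: "finite Sig" and "P (vars Sig)"
    and over: "eqns_over (Ai i) Sig" and ext: "is_extension (Ai i) act Sig (Ai j)"
    using built_chain_succ[OF ch succ] by blast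
  have "r ` Ai i \<subseteq> A" using r unfolding retraction_def by blast
  then have "has_solution_in A act (map_eqn_const r ` Sig)"
    if "consistent A act (map_eqn_const r ` Sig)"
    using pure[OF finite_imageI[OF fin] eqns_over_map_eqn_const[OF over] _ that]
      \<open>P (vars Sig)\<close> by (simp add: vars_map_eqn_const)
  with built_chain_stage[OF A ch] show ?thesis
    by (intro retraction_extends_to_extension[OF A _ r ext over]) auto
qed

lemma chain_retraction_coherent:
  fixes Ai :: "'i::wellorder \<Rightarrow> 'a set"
  assumes A: "is_act A act" and ch: "built_chain (\<lambda>Sig. P (vars Sig)) A B act Ai"
    and pure: "\<And>Sig. finite Sig \<Longrightarrow> eqns_over A Sig \<Longrightarrow> P (vars Sig) \<Longrightarrow> consistent A act Sig \<Longrightarrow>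
      has_solution_in A act Sig"
  shows "retraction A act (Ai j) (chain_retraction A act Ai j) \<and>
    (\<forall>i\<le>j. \<forall>a\<in>Ai i. chain_retraction A act Ai j a = chain_retraction A act Ai i a)"
proof (induction j rule: less_induct)
  case (less j)
  let ?R = "chain_retraction A act Ai"
  have stage: "is_act (Ai k) act" "\<forall>i\<le>k. Ai i \<subseteq> Ai k" for k
    using built_chain_stage[OF A ch] by blast+
  show ?case
  proof (cases j rule: stage_cases)
    case least
    then have "\<forall>i\<le>j. i = j" by (simp add: order.antisym)
    moreover have "Ai j = A" by (rule built_chain_least[OF ch least])
    moreover have "?R j = id" by (rule chain_retraction_least[OF least])
    ultimately show ?thesis by (auto simp: retraction_def)
  next
    case (succ i)
    then have "i < j" unfolding immediate_succ_def by blast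
    have ri: "retraction A act (Ai i) (?R i)"
      and coh_i: "\<forall>k\<le>i. \<forall>a\<in>Ai k. ?R i a = ?R k a" using less.IH[OF \<open>i < j\<close>] by auto
    have "\<exists>r'. retraction A act (Ai j) r' \<and> (\<forall>a\<in>Ai i. r' a = ?R i a)"
      using A ch pure succ ri by (rule built_chain_retraction_extends)
    then have "retraction A act (Ai j) (?R j) \<and> (\<forall>a\<in>Ai i. ?R j a = ?R i a)"
      unfolding chain_retraction_succ[OF succ] extend_retraction_def by (rule someI_ex)
    then have rj: "retraction A act (Ai j) (?R j)" and ext_i: "\<forall>a\<in>Ai i. ?R j a = ?R i a"
      by (rule conjunct1, rule conjunct2)
    have "?R j a = ?R k a" if "k < j" "a \<in> Ai k" for k a
    proof -
      have "k \<le> i" using immediate_succ_less_iff_le[OF succ] that(1) by blast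
      then have "a \<in> Ai i" using stage(2)[of i] that(2) by blast
      then have "?R j a = ?R i a" using ext_i by blast
      also have "\<dots> = ?R k a" using coh_i \<open>k \<le> i\<close> that(2) by blast
      finally show ?thesis .
    qed
    then show ?thesis using rj by (auto simp: order.order_iff_strict)
  next
    case limit
    let ?I = "{i. i < j}"
    have IH: "retraction A act (Ai i) (?R i)" "\<forall>k\<le>i. \<forall>a\<in>Ai k. ?R i a = ?R k a" if "i \<in> ?I" for i
      using less.IH that by auto
    obtain i0 where "i0 \<in> ?I" using limit unfolding is_limit_def by blast
    then have "retraction A act (\<Union>i\<in>?I. Ai i) (glue_retractions Ai ?R ?I)"
      using stage(1) IH by (intro retraction_glue) auto
    moreover have "glue_retractions Ai ?R ?I a = ?R i a" if "i \<in> ?I" "a \<in> Ai i" for i a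
      using IH that by (intro glue_retractions_agree) auto
    moreover have "?R j = glue_retractions Ai ?R ?I" by (rule chain_retraction_limit[OF limit])
    ultimately show ?thesis
      using built_chain_limit[OF ch limit] by (auto simp: order.order_iff_strict)
  qed
qed

lemma built_chain_retract:
  fixes Ai :: "'i::wellorder \<Rightarrow> 'a set"
  assumes A: "is_act A act" and ch: "built_chain (\<lambda>Sig. P (vars Sig)) A B act Ai"
    and pure: "\<And>Sig. finite Sig \<Longrightarrow> eqns_over A Sig \<Longrightarrow> P (vars Sig) \<Longrightarrow> consistent A act Sig \<Longrightarrow>
      has_solution_in A act Sig"
  shows "is_retract A B act"
proof -
  note coherent = chain_retraction_coherent[OF A ch pure]
  have "retraction A act (\<Union>i\<in>UNIV. Ai i) (glue_retractions Ai (chain_retraction A act Ai) UNIV)"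
    using built_chain_stage[OF A ch] coherent by (intro retraction_glue) auto
  then show ?thesis using built_chain_union[OF ch] by (metis is_retract_if_retraction)
qed

theorem mainTheorem14:
  fixes n :: nat and A B :: "'a set" and act :: "'a \<Rightarrow> 's::monoid_mult \<Rightarrow> 'a"
    and Ai :: "'i::wellorder \<Rightarrow> 'a set"
  assumes "is_act A act"
  shows "(n_absolutely_pure n A act \<and> n_built_chain n A B act Ai \<longrightarrow> is_retract A B act) \<and>
         (absolutely_pure A act \<and> any_built_chain A B act Ai \<longrightarrow> is_retract A B act)"
proof (intro conjI impI; elim conjE)
  assume "n_absolutely_pure n A act" and "n_built_chain n A B act Ai"
  then show "is_retract A B act"
    using built_chain_retract[OF assms, where P = "\<lambda>X. card X \<le> n"]
    unfolding n_absolutely_pure_def n_built_chain_def by blast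
next
  assume "absolutely_pure A act" and "any_built_chain A B act Ai"
  then show "is_retract A B act"
    using built_chain_retract[OF assms, where P = "\<lambda>X. True"]
    unfolding absolutely_pure_def n_absolutely_pure_def any_built_chain_def by blast
qed

end
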